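(* Let $n\in\mathbb{N}$ and $S_{n,-1}(x)=\sum_{k=0}^n\Big(\binom{n}{k}x^k(1-x)^{n-k}\Big)^2$ for $x\in[0,1]$. Then $$S_{n,-1}^{(2j)}\!\left(\tfrac12\right)>0,\qquad j=0,1,\dots,n.$$
   Context: $S_{n,-1}^{(m)}$ denotes the $m$-th derivative of the polynomial $S_{n,-1}$. *)

theory Defs
  imports "HOL-Computational_Algebra.Polynomial"
begin

definition S_neg1 :: "nat \<Rightarrow> real poly" where
  "S_neg1 n = (\<Sum>k = 0..n. (smult (real (n choose k)) ([:0, 1:] ^ k * [:1, -1:] ^ (n - k))) ^ 2)"

end

theory Submission
  imports Defs
begin

text \<open>Put \<open>x = 1/2 + t\<close>, \<open>a = 1/2 + t\<close>, \<open>b = 1/2 - t\<close>. Then \<open>S\<^sub>n\<^sub>,\<^sub>-\<^sub>1(x)\<close> is the middle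
  coefficient (of \<open>y\<^sup>n\<close>) of \<open>((b + a y)(a + b y))\<^sup>n = (t\<^sup>2 R + P)\<^sup>n\<close> with
  \<open>R = -(1 - y)\<^sup>2\<close> and \<open>P = (1 + y)\<^sup>2/4\<close>. Expanding binomially, the coefficient of \<open>t\<^sup>2\<^sup>i\<close> is
  \<open>binom n i\<close> times the middle coefficient of \<open>R\<^sup>i P\<^sup>n\<^sup>-\<^sup>i\<close>, which up to a positive factor and the sign
  \<open>(-1)\<^sup>i\<close> is the middle coefficient of \<open>G\<^sup>2\<close> for \<open>G = (1 - y)\<^sup>i (1 + y)\<^sup>n\<^sup>-\<^sup>i\<close>. Since \<open>G\<close> is
  palindromic up to the same sign \<open>(-1)\<^sup>i\<close>, that middle coefficient is \<open>(-1)\<^sup>i\<close> times the sum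
  of the squares of the coefficients of \<open>G\<close>; so all Taylor coefficients of \<open>S\<^sub>n\<^sub>,\<^sub>-\<^sub>1\<close> at \<open>1/2\<close>
  of even order are positive.\<close>

lemma higher_pderiv_pcompose_linear:
  fixes p :: "'a :: idom poly"
  shows "(pderiv ^^ m) (p \<circ>\<^sub>p [:c, 1:]) = (pderiv ^^ m) p \<circ>\<^sub>p [:c, 1:]"
  by (induction m) (simp_all add: pderiv_pcompose pderiv_pCons)

lemma poly_higher_pderiv_eq_coeff_pcompose:
  fixes p :: "'a :: field_char_0 poly"
  shows "poly ((pderiv ^^ m) p) c = fact m * coeff (p \<circ>\<^sub>p [:c, 1:]) m"
proof -
  have "poly ((pderiv ^^ m) p) c = poly ((pderiv ^^ m) p \<circ>\<^sub>p [:c, 1:]) 0"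
    by (simp add: poly_pcompose)
  also have "\<dots> = coeff ((pderiv ^^ m) (p \<circ>\<^sub>p [:c, 1:])) 0"
    by (simp add: higher_pderiv_pcompose_linear poly_0_coeff_0)
  also have "\<dots> = fact m * coeff (p \<circ>\<^sub>p [:c, 1:]) m"
    by (simp add: coeff_higher_pderiv pochhammer_fact)
  finally show ?thesis .
qed

lemma sum_binomial_squares_eq_coeff:
  fixes a b :: "'a :: comm_semiring_1"
  shows "(\<Sum>k\<le>n. (of_nat (n choose k) * a ^ k * b ^ (n - k))\<^sup>2)
     = coeff ([:b, a:] ^ n * [:a, b:] ^ n) n"
  unfolding coeff_mult
proof (rule sum.cong)
  fix k assume "k \<in> {..n}"
  then have k: "k \<le> n" by simp
  then show "(of_nat (n choose k) * a ^ k * b ^ (n - k))\<^sup>2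
      = coeff ([:b, a:] ^ n) k * coeff ([:a, b:] ^ n) (n - k)"
    by (simp add: coeff_linear_poly_power binomial_symmetric[OF k, symmetric]
        power2_eq_square mult_ac)
qed simp

lemma coeff_mult_self_degree_if_reflect:
  fixes p :: "'a :: comm_ring_1 poly"
  assumes "reflect_poly p = smult c p"
  shows "coeff (p * p) (degree p) = c * (\<Sum>m\<le>degree p. (coeff p m)\<^sup>2)"
proof -
  have "coeff p (degree p - m) = c * coeff p m" if "m \<le> degree p" for m
    using that arg_cong[OF assms, of "\<lambda>q. coeff q m"] by (simp add: coeff_reflect_poly)
  then show ?thesis
    by (simp add: coeff_mult sum_distrib_left power2_eq_square mult_ac)
qed

lemma sum_coeff_squares_pos:
  fixes p :: "'a :: linordered_idom poly"
  assumes "p \<noteq> 0"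
  shows "(\<Sum>m\<le>degree p. (coeff p m)\<^sup>2) > 0"
proof -
  have "0 < (lead_coeff p)\<^sup>2"
    using assms by simp
  also have "\<dots> \<le> (\<Sum>m\<le>degree p. (coeff p m)\<^sup>2)"
    using member_le_sum[of "degree p" "{..degree p}" "\<lambda>m. (coeff p m)\<^sup>2"] by simp
  finally show ?thesis .
qed

lemma reflect_poly_one_minus_one_plus:
  "reflect_poly ([:1, -1:] ^ i * [:1, 1:] ^ m :: 'a :: idom poly)
     = smult ((-1) ^ i) ([:1, -1:] ^ i * [:1, 1:] ^ m)"
proof -
  have minus: "reflect_poly [:1, -1::'a:] = smult (-1) [:1, -1:]"
    by (simp add: reflect_poly_pCons)
  have plus: "reflect_poly [:1, 1::'a:] = [:1, 1:]"
    by (simp add: reflect_poly_pCons)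
  show ?thesis
    by (simp only: reflect_poly_mult reflect_poly_power minus plus smult_power mult_smult_left)
qed

lemma middle_coeff_pos:
  fixes i n :: nat
  assumes "i \<le> n"
  shows "coeff ([:-1, 2, -1:] ^ i * [:1/4, 1/2, 1/4:] ^ (n - i) :: real poly) n > 0"
proof -
  define G :: "real poly" where "G = [:1, -1:] ^ i * [:1, 1:] ^ (n - i)"
  have deg: "degree G = n"
    using assms by (simp add: G_def degree_mult_eq degree_power_eq)
  have "G \<noteq> 0"
    by (simp add: G_def)
  have "reflect_poly G = smult ((-1) ^ i) G"
    unfolding G_def by (rule reflect_poly_one_minus_one_plus)
  have "[:-1, 2, -1:] ^ i * [:1/4, 1/2, 1/4:] ^ (n - i)
      = smult ((-1) ^ i * (1/4) ^ (n - i)) (G * G)"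
  proof -
    have "[:-1, 2, -1:] = smult (-1) ([:1, -1:] * [:1, -1:] :: real poly)"
      and "[:1/4, 1/2, 1/4:] = smult (1/4) ([:1, 1:] * [:1, 1:] :: real poly)"
      by simp_all
    then show ?thesis
      by (simp only: G_def smult_power power_mult_distrib smult_smult mult_smult_left
          mult_smult_right mult_ac)
  qed
  then have "coeff ([:-1, 2, -1:] ^ i * [:1/4, 1/2, 1/4:] ^ (n - i)) n
      = (1/4) ^ (n - i) * (\<Sum>m\<le>n. (coeff G m)\<^sup>2)"
    using coeff_mult_self_degree_if_reflect[OF \<open>reflect_poly G = _\<close>]
    by (simp add: deg flip: power_mult_distrib)
  with sum_coeff_squares_pos[OF \<open>G \<noteq> 0\<close>] show ?thesis
    by (simp add: deg)
qed

lemma poly_S_neg1_shifted: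
  fixes t :: real
  shows "poly (S_neg1 n \<circ>\<^sub>p [:1/2, 1:]) t
     = (\<Sum>i\<le>n. real (n choose i) * coeff ([:-1, 2, -1:] ^ i * [:1/4, 1/2, 1/4:] ^ (n - i)) n
                 * t ^ (2 * i))"
proof -
  define a where "a = 1/2 + t"
  define b where "b = 1/2 - t"
  define R :: "real poly" where "R = [:-1, 2, -1:]"
  define P :: "real poly" where "P = [:1/4, 1/2, 1/4:]"
  have "poly (S_neg1 n \<circ>\<^sub>p [:1/2, 1:]) t
      = (\<Sum>k\<le>n. (real (n choose k) * a ^ k * b ^ (n - k))\<^sup>2)"
    by (simp add: S_neg1_def poly_pcompose poly_sum a_def b_def mult.assoc atLeast0AtMost)
  also have "\<dots> = coeff (([:b, a:] * [:a, b:]) ^ n) n"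
    using sum_binomial_squares_eq_coeff[of n a b] by (simp only: power_mult_distrib)
  also have "[:b, a:] * [:a, b:] = smult (t\<^sup>2) R + P"
    by (simp add: a_def b_def R_def P_def algebra_simps power2_eq_square)
  also have "coeff ((smult (t\<^sup>2) R + P) ^ n) n
      = (\<Sum>i\<le>n. real (n choose i) * coeff (R ^ i * P ^ (n - i)) n * t ^ (2 * i))"
    by (simp add: binomial_ring coeff_sum of_nat_poly smult_power mult_ac flip: power_mult)
  finally show ?thesis
    by (simp add: R_def P_def)
qed

theorem mainTheorem5:
  fixes n j :: nat
  assumes "j \<le> n"
  shows "poly ((pderiv ^^ (2 * j)) (S_neg1 n)) (1 / 2) > 0"
proof -
  define e where "e i = coeff ([:-1, 2, -1:] ^ i * [:1/4, 1/2, 1/4:] ^ (n - i) :: real poly) n" for i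
  define U where "U = (\<Sum>i\<le>n. monom (real (n choose i) * e i) (2 * i))"
  have "poly (S_neg1 n \<circ>\<^sub>p [:1/2, 1:]) = poly U"
    by (simp add: fun_eq_iff poly_S_neg1_shifted U_def e_def poly_sum poly_monom)
  then have "S_neg1 n \<circ>\<^sub>p [:1/2, 1:] = U"
    by (simp add: poly_eq_poly_eq_iff)
  moreover have "coeff U (2 * j) = real (n choose j) * e j"
    using assms by (simp add: U_def coeff_sum)
  moreover have "e j > 0"
    unfolding e_def using assms by (rule middle_coeff_pos)
  ultimately show ?thesis
    using assms by (simp add: poly_higher_pderiv_eq_coeff_pcompose)
qed

end
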